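(* Fix integers $K\ge1$, $m_0\ge1$, a $p\times p$ matrix $G$, a threshold $\delta>0$, and $\epsilon>0$. Suppose the graph $\mathcal G^{*,\delta}$ is $K$-sparse, and that $\mathrm{sgn}(|\beta_1|),\dots,\mathrm{sgn}(|\beta_p|)$ are i.i.d. Bernoulli$(\epsilon)$. Then, except on an event of probability at most $p(e\epsilon K)^{m_0+1}$, $m_0^*(S(\beta),G,\delta)\le m_0$.
   Context: $\Omega^{*,\delta}(i,j)=G(i,j)1\{|G(i,j)|\ge\delta\}$; $\mathcal G^{*,\delta}$ is the graph on $\{1,\dots,p\}$ with an edge between $i\ne j$ iff $\Omega^{*,\delta}(i,j)\ne0$. A graph is $K$-sparse if its maximum degree is at most $K$. $S(\beta)=\{j:\beta_j\ne0\}$; $\mathcal G^{*,\delta}_S$ is the subgraph of $\mathcal G^{*,\delta}$ induced by $S(\beta)$, and $m_0^*(S(\beta),G,\delta)$ is the maximum number of nodes in a connected component of $\mathcal G^{*,\delta}_S$. *)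

theory Defs
  imports "HOL-Probability.Probability"
begin

text \<open>Nodes are 1..p. Matrices are functions nat => nat => real.\<close>

definition Omega_thr :: "(nat \<Rightarrow> nat \<Rightarrow> real) \<Rightarrow> real \<Rightarrow> nat \<Rightarrow> nat \<Rightarrow> real" where
  "Omega_thr G \<delta> i j = G i j * (if \<bar>G i j\<bar> \<ge> \<delta> then 1 else 0)"

text \<open>Undirected edge of the thresholded graph (symmetrised; coincides with the paper for symmetric G).\<close>
definition thr_edge :: "(nat \<Rightarrow> nat \<Rightarrow> real) \<Rightarrow> real \<Rightarrow> nat \<Rightarrow> nat \<Rightarrow> bool" where
  "thr_edge G \<delta> i j \<longleftrightarrow> i \<noteq> j \<and> (Omega_thr G \<delta> i j \<noteq> 0 \<or> Omega_thr G \<delta> j i \<noteq> 0)"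

definition K_sparse :: "nat \<Rightarrow> (nat \<Rightarrow> nat \<Rightarrow> real) \<Rightarrow> real \<Rightarrow> nat \<Rightarrow> bool" where
  "K_sparse p G \<delta> K \<longleftrightarrow> (\<forall>i\<in>{1..p}. card {j\<in>{1..p}. thr_edge G \<delta> i j} \<le> K)"

definition component_in :: "nat set \<Rightarrow> (nat \<Rightarrow> nat \<Rightarrow> real) \<Rightarrow> real \<Rightarrow> nat \<Rightarrow> nat set" where
  "component_in S G \<delta> i = {j. i \<in> S \<and> (\<lambda>a b. a \<in> S \<and> b \<in> S \<and> thr_edge G \<delta> a b)\<^sup>*\<^sup>* i j}"

definition m0_star :: "nat set \<Rightarrow> (nat \<Rightarrow> nat \<Rightarrow> real) \<Rightarrow> real \<Rightarrow> nat" where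
  "m0_star S G \<delta> = Max (insert 0 ((\<lambda>i. card (component_in S G \<delta> i)) ` S))"

definition supp_vec :: "nat \<Rightarrow> (nat \<Rightarrow> real) \<Rightarrow> nat set" where
  "supp_vec p \<beta> = {j\<in>{1..p}. \<beta> j \<noteq> 0}"

end

theory Submission
  imports Defs
begin

(*
  If some component of the support has more than m0 nodes, some node v lies in a connected set
  of exactly m = m0 + 1 support nodes. A fixed m-set lies in the support with probability eps^m,
  and in a graph of maximum degree K there are at most (eK)^m connected m-sets through v, so the
  union bound over v and these sets gives p (e eps K)^m.
*)

abbreviation induced :: "('a \<Rightarrow> 'a \<Rightarrow> bool) \<Rightarrow> 'a set \<Rightarrow> 'a \<Rightarrow> 'a \<Rightarrow> bool" where
  "induced E C \<equiv> \<lambda>a b. a \<in> C \<and> b \<in> C \<and> E a b"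

definition rooted_connected :: "('a \<Rightarrow> 'a \<Rightarrow> bool) \<Rightarrow> 'a set \<Rightarrow> 'a \<Rightarrow> bool" where
  "rooted_connected E C v \<longleftrightarrow> v \<in> C \<and> (\<forall>d\<in>C. (induced E C)\<^sup>*\<^sup>* v d)"

definition outer_boundary :: "('a \<Rightarrow> 'a \<Rightarrow> bool) \<Rightarrow> 'a set \<Rightarrow> 'a set \<Rightarrow> 'a set" where
  "outer_boundary E V C = {u\<in>V. u \<notin> C \<and> (\<exists>c\<in>C. E c u)}"

lemma induced_rtranclp_mono:
  assumes "C \<subseteq> D" "(induced E C)\<^sup>*\<^sup>* a b"
  shows "(induced E D)\<^sup>*\<^sup>* a b"
  using assms(2) by (rule rtranclp_mono[THEN predicate2D, rotated]) (use assms(1) in auto)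

lemma induced_rtranclp_closed:
  assumes "(induced E S)\<^sup>*\<^sup>* i j" "i \<in> S"
  shows "j \<in> S"
  using assms by (induction rule: rtranclp_induct) auto

lemma rtranclp_leaves_set:
  assumes "R\<^sup>*\<^sup>* i j" "i \<in> D" "j \<notin> D"
  shows "\<exists>a b. a \<in> D \<and> b \<notin> D \<and> R a b"
  using assms by (induction rule: rtranclp_induct) auto

lemma rooted_connected_singleton: "rooted_connected E {v} v"
  unfolding rooted_connected_def by auto

lemma rooted_connected_insert:
  assumes C: "rooted_connected E C v" and "a \<in> C" "E a b"
  shows "rooted_connected E (insert b C) v"
proof -
  have reach: "(induced E (insert b C))\<^sup>*\<^sup>* v d" if "d \<in> C" for d
    using C that unfolding rooted_connected_def by (blast intro: induced_rtranclp_mono[of C])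
  have "(induced E (insert b C))\<^sup>*\<^sup>* v b"
    using reach[OF \<open>a \<in> C\<close>] assms(2,3) by (simp add: rtranclp.rtrancl_into_rtrancl)
  with reach C show ?thesis unfolding rooted_connected_def by auto
qed

lemma exists_rooted_connected_subset:
  assumes "1 \<le> k" "k \<le> card {j. (induced E S)\<^sup>*\<^sup>* i j}"
  shows "\<exists>D \<subseteq> {j. (induced E S)\<^sup>*\<^sup>* i j}. card D = k \<and> rooted_connected E D i"
  using assms
proof (induction k rule: nat_induct_at_least)
  case base
  then show ?case using rooted_connected_singleton by (intro exI[of _ "{i}"]) auto
next
  case (Suc k)
  define comp where "comp = {j. (induced E S)\<^sup>*\<^sup>* i j}"
  obtain D where D: "D \<subseteq> comp" "card D = k" "rooted_connected E D i"
    using Suc by (auto simp: comp_def)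
  have "k < card comp" using Suc.prems D(2) by (simp add: comp_def)
  then have "finite comp" by (intro card_ge_0_finite) simp
  have "D \<subset> comp" using D(1,2) \<open>k < card comp\<close> by auto
  then obtain j where "j \<in> comp" "j \<notin> D" by blast
  moreover have "i \<in> D" using D(3) by (simp add: rooted_connected_def)
  ultimately obtain a b where ab: "a \<in> D" "b \<notin> D" "induced E S a b"
    using rtranclp_leaves_set[of "induced E S" i j D] unfolding comp_def by blast
  have "b \<in> comp" using ab D(1) unfolding comp_def by (auto intro: rtranclp.rtrancl_into_rtrancl)
  moreover have "card (insert b D) = Suc k"
    using D(1,2) ab(2) \<open>finite comp\<close> by (simp add: finite_subset)
  ultimately show ?case using rooted_connected_insert[OF D(3) ab(1)] ab(3) D(1)
    by (intro exI[of _ "insert b D"]) (auto simp: comp_def)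
qed

lemma rooted_connected_subset_of_boundary_avoiding:
  assumes C: "rooted_connected E C v" and D: "rooted_connected E D v"
    and "D \<subseteq> T" "D \<subseteq> V" "outer_boundary E V C \<inter> T = {}"
  shows "D \<subseteq> C"
proof
  fix d assume "d \<in> D"
  then have "(induced E D)\<^sup>*\<^sup>* v d" using D unfolding rooted_connected_def by blast
  then show "d \<in> C"
  proof (induction rule: rtranclp_induct)
    case base
    then show ?case using C unfolding rooted_connected_def by blast
  next
    case (step a b)
    show ?case
    proof (rule ccontr)
      assume "b \<notin> C"
      have "a \<in> C" "b \<in> D" "E a b" using step.IH step.hyps(2) by simp_all
      with \<open>b \<notin> C\<close> assms(4) have "b \<in> outer_boundary E V C" unfolding outer_boundary_def by blast
      with \<open>b \<in> D\<close> assms(3,5) show False by blast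
    qed
  qed
qed

lemma rooted_connected_eq_of_boundary_avoiding:
  assumes "rooted_connected E C v" "rooted_connected E D v"
    and "C \<union> D \<subseteq> T" "C \<union> D \<subseteq> V"
    and "outer_boundary E V C \<inter> T = {}" "outer_boundary E V D \<inter> T = {}"
  shows "C = D"
proof (rule subset_antisym)
  show "C \<subseteq> D"
    using assms(3-4,6) by (intro rooted_connected_subset_of_boundary_avoiding[OF assms(2,1)]) auto
  show "D \<subseteq> C"
    using assms(3-5) by (intro rooted_connected_subset_of_boundary_avoiding[OF assms(1,2)]) auto
qed

lemma rooted_connected_has_neighbour:
  assumes C: "rooted_connected E C v" and "2 \<le> card C" "c \<in> C" "symp E"
  shows "\<exists>d\<in>C. E c d"
proof (cases "c = v")
  case True
  have "\<not> C \<subseteq> {v}"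
  proof
    assume "C \<subseteq> {v}"
    then have "card C \<le> card {v}" by (intro card_mono) auto
    with assms(2) show False by simp
  qed
  then obtain w where w: "w \<in> C" "w \<noteq> v" by blast
  have "(induced E C)\<^sup>*\<^sup>* v w" using C w(1) unfolding rooted_connected_def by blast
  then have "w \<noteq> v \<longrightarrow> (\<exists>d\<in>C. E v d)"
    by (induction rule: converse_rtranclp_induct) auto
  with w True show ?thesis by blast
next
  case False
  have "(induced E C)\<^sup>*\<^sup>* v c" using C assms(3) unfolding rooted_connected_def by blast
  then have "c \<noteq> v \<longrightarrow> (\<exists>d\<in>C. E d c)"
    by (induction rule: rtranclp_induct) auto
  with False assms(4) show ?thesis by (blast dest: sympD)
qed

text \<open>Each vertex of C has a neighbour inside C, hence at most K - 1 outside.\<close>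
lemma card_outer_boundary_le:
  assumes "rooted_connected E C v" "2 \<le> card C" "C \<subseteq> V" "finite V" "symp E"
    and deg: "\<And>c. c \<in> V \<Longrightarrow> card {j\<in>V. E c j} \<le> K"
  shows "card (outer_boundary E V C) \<le> (K - 1) * card C"
proof -
  have "finite C" using assms(3,4) finite_subset by blast
  have "outer_boundary E V C \<subseteq> (\<Union>c\<in>C. {j\<in>V. E c j} - C)"
    unfolding outer_boundary_def by blast
  then have "card (outer_boundary E V C) \<le> card (\<Union>c\<in>C. {j\<in>V. E c j} - C)"
    using \<open>finite C\<close> assms(4) by (simp add: card_mono)
  also have "\<dots> \<le> (\<Sum>c\<in>C. card ({j\<in>V. E c j} - C))"
    using \<open>finite C\<close> by (rule card_UN_le)
  also have "\<dots> \<le> (\<Sum>c\<in>C. K - 1)"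
  proof (rule sum_mono)
    fix c assume "c \<in> C"
    then obtain d where "d \<in> C" "E c d"
      using rooted_connected_has_neighbour[OF assms(1,2) _ assms(5)] by blast
    then have "{j\<in>V. E c j} - C \<subset> {j\<in>V. E c j}" using assms(3) by blast
    then have "card ({j\<in>V. E c j} - C) < card {j\<in>V. E c j}"
      using assms(4) by (simp add: psubset_card_mono)
    moreover have "card {j\<in>V. E c j} \<le> K" using deg \<open>c \<in> C\<close> assms(3) by blast
    ultimately show "card ({j\<in>V. E c j} - C) \<le> K - 1" by linarith
  qed
  finally show ?thesis by (simp add: mult.commute)
qed

lemma one_le_one_minus_inverse_power_mult_exp:
  assumes "K \<ge> (1::nat)"
  shows "1 \<le> (1 - 1 / real K) ^ (K - 1) * exp 1"
proof (cases "K = 1")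
  case False
  define n where "n = K - 1"
  have n: "real n > 0" "real K = real n + 1" using False assms unfolding n_def by auto
  have "1 - 1 / real K = real n / real K" "1 + 1 / real n = real K / real n"
    using n by (simp_all add: field_simps)
  then have "(1 - 1 / real K) * (1 + 1 / real n) = 1" using n by simp
  then have "1 = (1 - 1 / real K) ^ n * (1 + 1 / real n) ^ n" by (metis power_mult_distrib power_one)
  also have "\<dots> \<le> (1 - 1 / real K) ^ n * exp 1"
    using exp_ge_one_plus_x_over_n_power_n[of n 1] n by (intro mult_left_mono) auto
  finally show ?thesis unfolding n_def .
qed simp

lemma measure_Pi_pmf_bernoulli_pattern:
  assumes "finite V" "A \<subseteq> V" "B \<subseteq> V" "A \<inter> B = {}" "0 \<le> x" "x \<le> 1"
  shows "measure_pmf.prob (Pi_pmf V False (\<lambda>_. bernoulli_pmf x))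
      (Pi V (\<lambda>j. if j \<in> A then {True} else if j \<in> B then {False} else UNIV))
    = x ^ card A * (1 - x) ^ card B"
proof -
  have "measure_pmf.prob (Pi_pmf V False (\<lambda>_. bernoulli_pmf x))
      (Pi V (\<lambda>j. if j \<in> A then {True} else if j \<in> B then {False} else UNIV))
    = (\<Prod>j\<in>V. if j \<in> A then x else if j \<in> B then 1 - x else 1)"
    using assms by (subst measure_Pi_pmf_Pi) (auto intro!: prod.cong simp: measure_pmf_single)
  also have "\<dots> = x ^ card A * (1 - x) ^ card B"
  proof -
    have "V \<inter> {j. j \<in> A} = A" "V \<inter> - {j. j \<in> A} \<inter> {j. j \<in> B} = B"
      using assms(2-4) by blast+
    then show ?thesis using assms(1) by (simp add: prod.If_cases)
  qed
  finally show ?thesis .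
qed

definition rooted_connected_sets :: "('a \<Rightarrow> 'a \<Rightarrow> bool) \<Rightarrow> 'a set \<Rightarrow> nat \<Rightarrow> 'a \<Rightarrow> 'a set set" where
  "rooted_connected_sets E V m v = {C. C \<subseteq> V \<and> card C = m \<and> rooted_connected E C v}"

lemma finite_rooted_connected_sets: "finite V \<Longrightarrow> finite (rooted_connected_sets E V m v)"
  unfolding rooted_connected_sets_def by (rule rev_finite_subset[of "Pow V"]) auto

text \<open>Occupation patterns in which C is occupied and its outer boundary vacant, written as a
  product set so that its probability under Pi_pmf factorises.\<close>
definition cluster_event :: "('a \<Rightarrow> 'a \<Rightarrow> bool) \<Rightarrow> 'a set \<Rightarrow> 'a set \<Rightarrow> ('a \<Rightarrow> bool) set" where
  "cluster_event E V C =
    Pi V (\<lambda>j. if j \<in> C then {True} else if j \<in> outer_boundary E V C then {False} else UNIV)"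

lemma cluster_event_occupied:
  assumes "\<omega> \<in> cluster_event E V C" "C \<subseteq> V"
  shows "C \<subseteq> {j. \<omega> j}" "outer_boundary E V C \<inter> {j. \<omega> j} = {}"
proof -
  show "C \<subseteq> {j. \<omega> j}" using assms unfolding cluster_event_def Pi_def by auto
  show "outer_boundary E V C \<inter> {j. \<omega> j} = {}"
  proof safe
    fix j assume j: "j \<in> outer_boundary E V C" "\<omega> j"
    then have "j \<in> V" "j \<notin> C" by (auto simp: outer_boundary_def)
    with j assms(1) show "j \<in> {}" unfolding cluster_event_def by (auto dest!: Pi_mem)
  qed
qed

lemma disjoint_family_on_cluster_event:
  "disjoint_family_on (cluster_event E V) (rooted_connected_sets E V m v)"
  unfolding disjoint_family_on_def
proof (intro ballI impI)
  fix C D assume CD: "C \<in> rooted_connected_sets E V m v" "D \<in> rooted_connected_sets E V m v"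
    and "C \<noteq> D"
  show "cluster_event E V C \<inter> cluster_event E V D = {}"
  proof (rule ccontr)
    assume "cluster_event E V C \<inter> cluster_event E V D \<noteq> {}"
    then obtain \<omega> where "\<omega> \<in> cluster_event E V C" "\<omega> \<in> cluster_event E V D" by blast
    with CD have "C = D"
      by (intro rooted_connected_eq_of_boundary_avoiding[of E C v D "{j. \<omega> j}" V])
        (simp_all add: cluster_event_occupied rooted_connected_sets_def)
    with \<open>C \<noteq> D\<close> show False ..
  qed
qed

text \<open>Occupy every vertex independently with probability 1/K. The cluster events of the
  connected m-sets through v are disjoint, and each has probability at least
  K^-m (1 - 1/K)^((K-1)m) \<ge> (eK)^-m.\<close>
lemma card_rooted_connected_sets_le:
  assumes "finite V" "K \<ge> 1" "2 \<le> m" "symp E"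
    and deg: "\<And>c. c \<in> V \<Longrightarrow> card {j\<in>V. E c j} \<le> K"
  shows "real (card (rooted_connected_sets E V m v)) \<le> (exp 1 * real K) ^ m"
proof -
  define F where "F = rooted_connected_sets E V m v"
  define x where "x = 1 / real K"
  have x: "0 < x" "x \<le> 1" using assms(2) unfolding x_def by auto
  define Q where "Q = Pi_pmf V False (\<lambda>_. bernoulli_pmf x)"
  define q where "q = x ^ m * (1 - x) ^ ((K - 1) * m)"
  have lower: "q \<le> measure_pmf.prob Q (cluster_event E V C)" if "C \<in> F" for C
  proof -
    have C: "C \<subseteq> V" "card C = m" "rooted_connected E C v"
      using that unfolding F_def rooted_connected_sets_def by auto
    have "card (outer_boundary E V C) \<le> (K - 1) * m"
      using card_outer_boundary_le[OF C(3) _ C(1) assms(1,4) deg] C(2) assms(3) by simp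
    then have "(1 - x) ^ ((K - 1) * m) \<le> (1 - x) ^ card (outer_boundary E V C)"
      using x by (intro power_decreasing) auto
    moreover have "measure_pmf.prob Q (cluster_event E V C)
        = x ^ m * (1 - x) ^ card (outer_boundary E V C)"
      unfolding Q_def cluster_event_def using C assms(1) x
      by (subst measure_Pi_pmf_bernoulli_pattern) (auto simp: outer_boundary_def)
    ultimately show ?thesis unfolding q_def using x by (simp add: mult_left_mono)
  qed
  have "real (card F) * q \<le> (\<Sum>C\<in>F. measure_pmf.prob Q (cluster_event E V C))"
    using lower by (rule sum_bounded_below)
  also have "\<dots> = measure_pmf.prob Q (\<Union>C\<in>F. cluster_event E V C)"
    using disjoint_family_on_cluster_event finite_rooted_connected_sets[OF assms(1)]
    by (intro measure_pmf.finite_measure_finite_Union[symmetric]) (auto simp: F_def)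
  also have "\<dots> \<le> 1" by simp
  finally have "real (card F) * q \<le> 1" .
  moreover have "1 \<le> q * (exp 1 * real K) ^ m"
  proof -
    have "q * (exp 1 * real K) ^ m = ((1 - x) ^ (K - 1) * exp 1) ^ m"
      unfolding q_def x_def using assms(2)
      by (simp add: power_mult_distrib power_mult[symmetric] mult.commute field_simps)
    also have "1 \<le> \<dots>"
      using one_le_one_minus_inverse_power_mult_exp[OF assms(2)] unfolding x_def
      by (intro one_le_power) auto
    finally show ?thesis .
  qed
  moreover have "0 \<le> q" unfolding q_def using x by simp
  ultimately have "real (card F) \<le> real (card F) * q * (exp 1 * real K) ^ m"
    by (simp add: mult_le_cancel_left1 mult.assoc)
  also have "\<dots> \<le> (exp 1 * real K) ^ m"
    using \<open>real (card F) * q \<le> 1\<close> \<open>0 \<le> q\<close> by (intro mult_left_le_one_le) auto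
  finally show ?thesis unfolding F_def .
qed

context prob_space
begin

lemma prob_all_true_eq_power:
  assumes indep: "indep_vars (\<lambda>_. count_space UNIV) X V"
    and bern: "\<forall>j\<in>V. distr M (count_space UNIV) (X j) = measure_pmf (bernoulli_pmf \<epsilon>)"
    and "0 \<le> \<epsilon>" "\<epsilon> \<le> 1" "finite C" "C \<subseteq> V"
  shows "prob {\<omega> \<in> space M. \<forall>j\<in>C. X j \<omega>} = \<epsilon> ^ card C"
proof (cases "C = {}")
  case False
  have rv: "X j \<in> measurable M (count_space UNIV)" if "j \<in> V" for j
    using indep that unfolding indep_vars_def by blast
  have single: "prob (X j -` {True} \<inter> space M) = \<epsilon>" if "j \<in> V" for j
  proof -
    have "prob (X j -` {True} \<inter> space M) = measure (distr M (count_space UNIV) (X j)) {True}"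
      using rv[OF that] by (simp add: measure_distr)
    also have "\<dots> = \<epsilon>" using bern that assms(3,4) by (simp add: measure_pmf_single)
    finally show ?thesis .
  qed
  have "{\<omega> \<in> space M. \<forall>j\<in>C. X j \<omega>} = (\<Inter>j\<in>C. X j -` {True} \<inter> space M)"
    using False by auto
  also have "prob \<dots> = (\<Prod>j\<in>C. prob (X j -` {True} \<inter> space M))"
    using False assms(5,6) by (intro indep_varsD[OF indep]) auto
  also have "\<dots> = \<epsilon> ^ card C"
    using assms(6) single by (simp add: subset_eq)
  finally show ?thesis .
qed (simp add: prob_space)

lemma prob_rooted_connected_all_true_le:
  assumes "finite V" "K \<ge> 1" "2 \<le> m" "symp E"
    and deg: "\<And>c. c \<in> V \<Longrightarrow> card {j\<in>V. E c j} \<le> K"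
    and indep: "indep_vars (\<lambda>_. count_space UNIV) X V"
    and bern: "\<forall>j\<in>V. distr M (count_space UNIV) (X j) = measure_pmf (bernoulli_pmf \<epsilon>)"
    and "0 \<le> \<epsilon>" "\<epsilon> \<le> 1"
    and A: "A \<subseteq> {\<omega> \<in> space M. \<exists>v\<in>V. \<exists>C\<in>rooted_connected_sets E V m v. \<forall>j\<in>C. X j \<omega>}"
  shows "prob A \<le> real (card V) * (exp 1 * \<epsilon> * real K) ^ m"
proof -
  define occ where "occ C = {\<omega> \<in> space M. \<forall>j\<in>C. X j \<omega>}" for C
  define F where "F = rooted_connected_sets E V m"
  have C: "C \<subseteq> V" "finite C" "card C = m" if "C \<in> F v" for C v
    using that assms(1) unfolding F_def rooted_connected_sets_def by (auto intro: finite_subset)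
  have fF: "finite (F v)" for v
    unfolding F_def using assms(1) by (rule finite_rooted_connected_sets)
  have occ_sets: "occ C \<in> sets M" if "C \<in> F v" for C v
    using C[OF that] indep unfolding occ_def indep_vars_def
    by (intro sets.sets_Collect_finite_All) (auto simp flip: pred_def)
  have UN_sets: "(\<Union>C\<in>F v. occ C) \<in> sets M" for v
    using fF occ_sets by blast
  have "prob A \<le> prob (\<Union>v\<in>V. \<Union>C\<in>F v. occ C)"
  proof (cases "A \<in> sets M")
    case True
    have "A \<subseteq> (\<Union>v\<in>V. \<Union>C\<in>F v. occ C)" using A unfolding occ_def F_def by blast
    then show ?thesis using assms(1) UN_sets by (intro finite_measure_mono) auto
  qed (simp add: measure_notin_sets)
  also have "\<dots> \<le> (\<Sum>v\<in>V. \<Sum>C\<in>F v. prob (occ C))"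
    using assms(1) UN_sets fF occ_sets
    by (intro order.trans[OF measure_UNION_le] sum_mono measure_UNION_le) auto
  also have "\<dots> = (\<Sum>v\<in>V. real (card (F v)) * \<epsilon> ^ m)"
    using C prob_all_true_eq_power[OF indep bern assms(8,9)] unfolding occ_def by simp
  also have "\<dots> \<le> (\<Sum>v\<in>V. (exp 1 * real K) ^ m * \<epsilon> ^ m)"
    using card_rooted_connected_sets_le[OF assms(1-4) deg] assms(8)
    by (intro sum_mono mult_right_mono) (auto simp: F_def)
  also have "\<dots> = real (card V) * (exp 1 * \<epsilon> * real K) ^ m"
    by (simp add: power_mult_distrib mult_ac)
  finally show ?thesis .
qed

end

lemma m0_star_gt_imp_rooted_connected_support:
  assumes "n < m0_star (supp_vec p b) G \<delta>"
  shows "\<exists>v\<in>{1..p}. \<exists>C\<in>rooted_connected_sets (thr_edge G \<delta>) {1..p} (n + 1) v. \<forall>j\<in>C. b j \<noteq> 0"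
proof -
  define S where "S = supp_vec p b"
  have S: "finite S" "S \<subseteq> {1..p}" "\<forall>j\<in>S. b j \<noteq> 0" unfolding S_def supp_vec_def by auto
  obtain i where i: "i \<in> S" "n < card (component_in S G \<delta> i)"
  proof -
    have "finite (insert 0 ((\<lambda>i. card (component_in S G \<delta> i)) ` S))" using S(1) by simp
    then show ?thesis using assms that unfolding m0_star_def S_def by (subst (asm) Max_gr_iff) auto
  qed
  then have size: "n + 1 \<le> card {j. (induced (thr_edge G \<delta>) S)\<^sup>*\<^sup>* i j}"
    by (simp add: component_in_def)
  obtain D where D: "D \<subseteq> {j. (induced (thr_edge G \<delta>) S)\<^sup>*\<^sup>* i j}" "card D = n + 1"
      "rooted_connected (thr_edge G \<delta>) D i"
    using exists_rooted_connected_subset[OF le_add2 size] by blast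
  moreover have "D \<subseteq> S"
    using D(1) i(1) induced_rtranclp_closed[where E="thr_edge G \<delta>" and S=S and i=i] by blast
  ultimately show ?thesis
    using i(1) S(2,3) unfolding rooted_connected_sets_def by blast
qed

theorem lemma1:
  fixes p K m0 :: nat and G :: "nat \<Rightarrow> nat \<Rightarrow> real" and \<delta> \<epsilon> :: real
    and M :: "'w measure" and \<beta> :: "'w \<Rightarrow> nat \<Rightarrow> real"
  assumes "K \<ge> 1" and "m0 \<ge> 1" and "\<delta> > 0" and "\<epsilon> > 0" and "\<epsilon> \<le> 1"
    and "K_sparse p G \<delta> K"
    and "prob_space M"
    and "prob_space.indep_vars M (\<lambda>_. count_space UNIV) (\<lambda>j \<omega>. \<beta> \<omega> j \<noteq> 0) {1..p}"
    and "\<forall>j\<in>{1..p}. distr M (count_space UNIV) (\<lambda>\<omega>. \<beta> \<omega> j \<noteq> 0) = measure_pmf (bernoulli_pmf \<epsilon>)"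
  shows "measure M {\<omega> \<in> space M. m0_star (supp_vec p (\<beta> \<omega>)) G \<delta> > m0}
           \<le> real p * (exp 1 * \<epsilon> * real K) ^ (m0 + 1)"
proof -
  interpret prob_space M by fact
  have "symp (thr_edge G \<delta>)" by (auto intro: sympI simp: thr_edge_def)
  have deg: "card {j\<in>{1..p}. thr_edge G \<delta> c j} \<le> K" if "c \<in> {1..p}" for c
    using assms(6) that unfolding K_sparse_def by blast
  have "{\<omega> \<in> space M. m0_star (supp_vec p (\<beta> \<omega>)) G \<delta> > m0} \<subseteq>
      {\<omega> \<in> space M. \<exists>v\<in>{1..p}. \<exists>C\<in>rooted_connected_sets (thr_edge G \<delta>) {1..p} (m0 + 1) v.
        \<forall>j\<in>C. \<beta> \<omega> j \<noteq> 0}"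
    using m0_star_gt_imp_rooted_connected_support by blast
  from prob_rooted_connected_all_true_le[OF _ assms(1) _ \<open>symp (thr_edge G \<delta>)\<close> deg assms(8,9) _
      assms(5) this]
  show ?thesis using assms(2,4) by simp
qed

end
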